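(* In the two-firm setting below, assume there are no equity cross-holdings ($M^s_{12}=M^s_{21}=0$) and that $\rho\in(-1,1)$; the debt cross-holdings $M^d_{12},M^d_{21}\in[0,1)$ are arbitrary. Keep $t<T$, and hence $\tau=T-t$, fixed. Let the current asset values $(a_1,a_2)=(a_{1,t},a_{2,t})$ tend to infinity, $a_1,a_2\to\infty$, along any path on which $a_1/a_2$ stays bounded and bounded away from $0$. Then the equity correlation satisfies $\rho^s\to\rho$.
   Context: Two-firm network model ($n=2$). Cross-holdings. $M^s_{12},M^s_{21},M^d_{12},M^d_{21}\in[0,1)$ are equity/debt cross-holding fractions: firm $i$ holds fraction $M^s_{ij}$ of firm $j$'s equity and fraction $M^d_{ij}$ of firm $j$'s debt. Diagonal entries are zero. Nominal debts are $d_1,d_2>0$. Payoffs at maturity. For terminal external asset values $\mathbf{a}_T\in(0,\infty)^2$, the terminal equity and debt values $\mathbf{x}^*(\mathbf{a}_T)=(s_1^*,s_2^*,r_1^*,r_2^* )$ are the unique solution of $$s_i=\max\Big\{0,\;a_{i,T}+\sum_j M^s_{ij}s_j+\sum_j M^d_{ij}r_j-d_i\Big\},$$ $$r_i=\min\Big\{d_i,\;a_{i,T}+\sum_j M^s_{ij}s_j+\sum_j M^d_{ij}r_j\Big\}.$$ Asset dynamics. Under the risk-neutral measure $Q$ the external assets follow the correlated geometric Brownian motion $$dA_{i,t}=rA_{i,t}\,dt+\sigma_iA_{i,t}\,dW_{i,t},$$ with interest rate $r$, volatilities $\sigma_1,\sigma_2>0$, and $d\langle W_1,W_2\rangle_t=\rho\,dt$.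 Prices and Deltas. With $\tau=T-t$, the time-$t$ equity prices are $$s_i=s_{i,t}=\mathbb{E}^Q_t\big[e^{-r\tau}s_i^*(\mathbf{A}_T)\big]$$ as functions of the current asset values $a_1,a_2$. The equity Deltas are $\Delta_{ij}=\partial s_{i,t}/\partial a_{j,t}$; write $\boldsymbol{\Delta}=(\Delta_{ij})$. Equity correlation. Let $\boldsymbol{\Sigma}=\begin{pmatrix}\sigma_1^2&\rho\sigma_1\sigma_2\\ \rho\sigma_1\sigma_2&\sigma_2^2\end{pmatrix}$ be the asset covariance matrix. The instantaneous equity covariance matrix is $$\boldsymbol{\Sigma}^s=\operatorname{diag}(s_1,s_2)^{-1}\,\boldsymbol{\Delta}\,\operatorname{diag}(a_1,a_2)\,\boldsymbol{\Sigma}\,\operatorname{diag}(a_1,a_2)\,\boldsymbol{\Delta}^T\operatorname{diag}(s_1,s_2)^{-1},$$ and the equity correlation is $\rho^s=\Sigma^s_{12}/\sqrt{\Sigma^s_{11}\Sigma^s_{22}}$. *)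

theory Defs
  imports "HOL-Probability.Probability"
begin

definition is_clearing ::
  "real \<Rightarrow> real \<Rightarrow> real \<Rightarrow> real \<Rightarrow> real \<Rightarrow> real \<Rightarrow> real \<Rightarrow> real
   \<Rightarrow> real \<times> real \<times> real \<times> real \<Rightarrow> bool" where
  "is_clearing Ms12 Ms21 Md12 Md21 d1 d2 a1 a2 x =
     (case x of (s1, s2, r1, r2) \<Rightarrow>
        s1 = max 0 (a1 + Ms12 * s2 + Md12 * r2 - d1) \<and>
        s2 = max 0 (a2 + Ms21 * s1 + Md21 * r1 - d2) \<and>
        r1 = min d1 (a1 + Ms12 * s2 + Md12 * r2) \<and>
        r2 = min d2 (a2 + Ms21 * s1 + Md21 * r1))"

definition terminal_values ::
  "real \<Rightarrow> real \<Rightarrow> real \<Rightarrow> real \<Rightarrow> real \<Rightarrow> real \<Rightarrow> real \<Rightarrow> real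
   \<Rightarrow> real \<times> real \<times> real \<times> real" where
  "terminal_values Ms12 Ms21 Md12 Md21 d1 d2 a1 a2 =
     (THE x. is_clearing Ms12 Ms21 Md12 Md21 d1 d2 a1 a2 x)"

definition terminal_equity ::
  "real \<Rightarrow> real \<Rightarrow> real \<Rightarrow> real \<Rightarrow> real \<Rightarrow> real \<Rightarrow> nat \<Rightarrow> real \<Rightarrow> real \<Rightarrow> real" where
  "terminal_equity Ms12 Ms21 Md12 Md21 d1 d2 i a1 a2 =
     (let x = terminal_values Ms12 Ms21 Md12 Md21 d1 d2 a1 a2 in
      if i = 1 then fst x else fst (snd x))"

text \<open>Terminal external assets under Q, given current values a1, a2, time to maturity tau,
written via two independent standard normals z1, z2:
W_1 increment = sqrt tau * z1, W_2 increment = sqrt tau * (rho z1 + sqrt(1-rho^2) z2),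
so that d<W_1,W_2> = rho dt (explicit solution of the correlated GBM).\<close>
definition terminal_asset1 :: "real \<Rightarrow> real \<Rightarrow> real \<Rightarrow> real \<Rightarrow> real \<Rightarrow> real" where
  "terminal_asset1 r sig1 tau a1 z1 =
     a1 * exp ((r - sig1\<^sup>2 / 2) * tau + sig1 * sqrt tau * z1)"

definition terminal_asset2 ::
  "real \<Rightarrow> real \<Rightarrow> real \<Rightarrow> real \<Rightarrow> real \<Rightarrow> real \<Rightarrow> real \<Rightarrow> real" where
  "terminal_asset2 r sig2 rho tau a2 z1 z2 =
     a2 * exp ((r - sig2\<^sup>2 / 2) * tau + sig2 * sqrt tau * (rho * z1 + sqrt (1 - rho\<^sup>2) * z2))"

definition equity_price ::
  "real \<Rightarrow> real \<Rightarrow> real \<Rightarrow> real \<Rightarrow> real \<Rightarrow> real \<Rightarrow> real \<Rightarrow> real \<Rightarrow> real \<Rightarrow> real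
   \<Rightarrow> real \<Rightarrow> nat \<Rightarrow> real \<Rightarrow> real \<Rightarrow> real" where
  "equity_price Ms12 Ms21 Md12 Md21 d1 d2 r sig1 sig2 rho tau i a1 a2 =
     (LINT z|(lborel \<Otimes>\<^sub>M lborel).
        std_normal_density (fst z) * std_normal_density (snd z) *
        (exp (- r * tau) *
         terminal_equity Ms12 Ms21 Md12 Md21 d1 d2 i
           (terminal_asset1 r sig1 tau a1 (fst z))
           (terminal_asset2 r sig2 rho tau a2 (fst z) (snd z))))"

definition equity_delta ::
  "real \<Rightarrow> real \<Rightarrow> real \<Rightarrow> real \<Rightarrow> real \<Rightarrow> real \<Rightarrow> real \<Rightarrow> real \<Rightarrow> real \<Rightarrow> real
   \<Rightarrow> real \<Rightarrow> nat \<Rightarrow> nat \<Rightarrow> real \<Rightarrow> real \<Rightarrow> real" where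
  "equity_delta Ms12 Ms21 Md12 Md21 d1 d2 r sig1 sig2 rho tau i j a1 a2 =
     (if j = 1
      then deriv (\<lambda>u. equity_price Ms12 Ms21 Md12 Md21 d1 d2 r sig1 sig2 rho tau i u a2) a1
      else deriv (\<lambda>u. equity_price Ms12 Ms21 Md12 Md21 d1 d2 r sig1 sig2 rho tau i a1 u) a2)"

definition asset_cov :: "real \<Rightarrow> real \<Rightarrow> real \<Rightarrow> nat \<Rightarrow> nat \<Rightarrow> real" where
  "asset_cov sig1 sig2 rho k l =
     (if k = 1 \<and> l = 1 then sig1\<^sup>2
      else if k = 2 \<and> l = 2 then sig2\<^sup>2
      else rho * sig1 * sig2)"

text \<open>Entry (i,j) of Sigma^s = diag(s)^{-1} Delta diag(a) Sigma diag(a) Delta^T diag(s)^{-1}.\<close>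
definition equity_cov ::
  "real \<Rightarrow> real \<Rightarrow> real \<Rightarrow> real \<Rightarrow> real \<Rightarrow> real \<Rightarrow> real \<Rightarrow> real \<Rightarrow> real \<Rightarrow> real
   \<Rightarrow> real \<Rightarrow> nat \<Rightarrow> nat \<Rightarrow> real \<Rightarrow> real \<Rightarrow> real" where
  "equity_cov Ms12 Ms21 Md12 Md21 d1 d2 r sig1 sig2 rho tau i j a1 a2 =
     (let s = (\<lambda>m. equity_price Ms12 Ms21 Md12 Md21 d1 d2 r sig1 sig2 rho tau m a1 a2);
          D = (\<lambda>m k. equity_delta Ms12 Ms21 Md12 Md21 d1 d2 r sig1 sig2 rho tau m k a1 a2);
          a = (\<lambda>k::nat. if k = 1 then a1 else a2)
      in \<Sum>k\<in>{1::nat,2}. \<Sum>l\<in>{1::nat,2}.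
           (inverse (s i) * D i k * a k) * asset_cov sig1 sig2 rho k l *
           (a l * D j l * inverse (s j)))"

definition equity_corr ::
  "real \<Rightarrow> real \<Rightarrow> real \<Rightarrow> real \<Rightarrow> real \<Rightarrow> real \<Rightarrow> real \<Rightarrow> real \<Rightarrow> real \<Rightarrow> real
   \<Rightarrow> real \<Rightarrow> real \<Rightarrow> real \<Rightarrow> real" where
  "equity_corr Ms12 Ms21 Md12 Md21 d1 d2 r sig1 sig2 rho tau a1 a2 =
     equity_cov Ms12 Ms21 Md12 Md21 d1 d2 r sig1 sig2 rho tau 1 2 a1 a2 /
     sqrt (equity_cov Ms12 Ms21 Md12 Md21 d1 d2 r sig1 sig2 rho tau 1 1 a1 a2 *
           equity_cov Ms12 Ms21 Md12 Md21 d1 d2 r sig1 sig2 rho tau 2 2 a1 a2)"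

end

theory Submission
  imports Defs
begin

text \<open>Without equity cross-holdings the clearing equations have a closed-form solution, so each
  terminal equity is a piecewise linear function of two correlated lognormal asset values.
  Driving both assets by one standard normal vector in \<open>\<real>\<^sup>2\<close>, a translation of that vector rescales
  one asset and leaves the other fixed; this moves the dependence on \<open>a\<^sub>1\<close> or \<open>a\<^sub>2\<close> into the
  smooth Gaussian density, and the prices become differentiable.

  Comparing increments pointwise, the own Delta \<open>\<Delta>\<^sub>i\<^sub>i\<close> is at least \<open>e\<^sup>-\<^sup>r\<^sup>\<tau>\<close> times the probability that
  firm \<open>i\<close>'s assets grow, whereas \<open>a\<^sub>j \<Delta>\<^sub>i\<^sub>j\<close> (\<open>j \<noteq> i\<close>) stays bounded: firm \<open>i\<close> only feels firm \<open>j\<close>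
  through its debt, which is repaid in full once \<open>a\<^sub>j\<close> is large. Hence the cross ratios
  \<open>\<Delta>\<^sub>i\<^sub>j a\<^sub>j / (\<Delta>\<^sub>i\<^sub>i a\<^sub>i)\<close> are \<open>O(1 / a\<^sub>i)\<close>, and \<open>\<rho>\<^sup>s\<close>, a continuous function of them equal to \<open>\<rho>\<close>
  at the origin, tends to \<open>\<rho>\<close>.\<close>

section \<open>Clearing without equity cross-holdings\<close>

text \<open>Debt payment of a firm with external assets \<open>x\<close> and face value \<open>d\<close> holding the fraction \<open>M\<close>
  of the counterparty's debt (face value \<open>e\<close>, external assets \<open>y\<close>, holding \<open>N\<close> of ours): substituting
  the counterparty's equation \<open>r' = min e (y + N * r)\<close> into \<open>r = min d (x + M * r')\<close> and solving
  the branch where neither firm pays in full gives the third term.\<close>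
definition clearing_debt :: "real \<Rightarrow> real \<Rightarrow> real \<Rightarrow> real \<Rightarrow> real \<Rightarrow> real \<Rightarrow> real" where
  "clearing_debt M N d e x y = min d (min (x + M * e) ((x + M * y) / (1 - M * N)))"

definition clearing_equity :: "real \<Rightarrow> real \<Rightarrow> real \<Rightarrow> real \<Rightarrow> real \<Rightarrow> real \<Rightarrow> real" where
  "clearing_equity M N d e x y = max 0 (x + M * clearing_debt N M e d y x - d)"

lemma abs_min_diff_le: "\<bar>min a b - min a' b'\<bar> \<le> max \<bar>a - a'\<bar> \<bar>b - b'\<bar>" for a b :: real
  by (simp add: min_def max_def abs_if)

lemma abs_max_diff_le: "\<bar>max a b - max a' b'\<bar> \<le> max \<bar>a - a'\<bar> \<bar>b - b'\<bar>" for a b :: real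
  by (simp add: max_def abs_if)

locale debt_network =
  fixes M N d e :: real
  assumes M: "0 \<le> M" "M < 1" and N: "0 \<le> N" "N < 1" and d: "0 < d" and e: "0 < e"
begin

lemma swap: "debt_network N M e d"
  using M N d e by unfold_locales

lemma denom_pos: "0 < 1 - M * N"
proof -
  have "M * N \<le> M" using M N by (simp add: mult_left_le)
  with M show ?thesis by simp
qed

lemma clearing_debt_fixpoint: "clearing_debt M N d e x y = min d (x + M * clearing_debt N M e d y x)"
proof -
  define b where "b = x + M * y"
  define D where "D = 1 - M * N"
  have D: "0 < D" using denom_pos by (simp add: D_def)
  have "x + M * ((y + N * x) / (1 - N * M)) = b / D"
    using D by (simp add: b_def D_def field_simps)
  then have "min d (x + M * clearing_debt N M e d y x)
      = min (x + M * e) (min d (min (b + M * N * d) (b / D)))"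
    using M(1) unfolding clearing_debt_def
    by (simp add: min_mult_distrib_left min_add_distrib_left b_def algebra_simps min.left_commute)
  also have "min d (min (b + M * N * d) (b / D)) = min d (b / D)"
  proof (cases "b \<le> D * d")
    case True
    moreover have "M * N * b \<le> M * N * (D * d)"
      using True M N by (simp add: mult_left_mono)
    ultimately have "b / D \<le> d" "b / D \<le> b + M * N * d"
      using D by (simp_all add: divide_le_eq mult.commute) (simp add: D_def algebra_simps)
    then show ?thesis by simp
  next
    case False
    then have "d < b / D" "d < b + M * N * d"
      using D by (auto simp: less_divide_eq D_def algebra_simps mult.commute)
    then show ?thesis by simp
  qed
  finally show ?thesis
    by (simp add: clearing_debt_def b_def D_def min.left_commute)
qed

lemma clearing_debt_fixpoint_swap: "clearing_debt N M e d y x = min e (y + N * clearing_debt M N d e x y)"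
  using debt_network.clearing_debt_fixpoint[OF swap] .

text \<open>The debt equations form a contraction with constant \<open>M * N < 1\<close>, which gives uniqueness.\<close>
lemma terminal_values_eq:
  "terminal_values 0 0 M N d e x y =
     (clearing_equity M N d e x y, clearing_equity N M e d y x, clearing_debt M N d e x y, clearing_debt N M e d y x)"
  unfolding terminal_values_def
proof (rule the_equality)
  show "is_clearing 0 0 M N d e x y (clearing_equity M N d e x y, clearing_equity N M e d y x,
      clearing_debt M N d e x y, clearing_debt N M e d y x)"
    unfolding is_clearing_def clearing_equity_def
    by (simp add: clearing_debt_fixpoint[symmetric] clearing_debt_fixpoint_swap[symmetric])
next
  fix c assume clearing: "is_clearing 0 0 M N d e x y c"
  obtain s1 s2 r1 r2 where c: "c = (s1, s2, r1, r2)" by (cases c)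
  have s: "s1 = max 0 (x + M * r2 - d)" "s2 = max 0 (y + N * r1 - e)"
    and r: "r1 = min d (x + M * r2)" "r2 = min e (y + N * r1)"
    using clearing[unfolded is_clearing_def c prod.case mult_zero_left add_0_right] by blast+
  define R1 R2 where "R1 = clearing_debt M N d e x y" and "R2 = clearing_debt N M e d y x"
  have contract1: "\<bar>r1 - R1\<bar> \<le> M * \<bar>r2 - R2\<bar>"
    using abs_min_diff_le[of d "x + M * r2" d "x + M * R2"] r(1) clearing_debt_fixpoint[of x y] M(1)
    by (simp add: R1_def R2_def right_diff_distrib[symmetric] abs_mult)
  have contract2: "\<bar>r2 - R2\<bar> \<le> N * \<bar>r1 - R1\<bar>"
    using abs_min_diff_le[of e "y + N * r1" e "y + N * R1"] r(2) clearing_debt_fixpoint_swap[of y x] N(1)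
    by (simp add: R1_def R2_def right_diff_distrib[symmetric] abs_mult)
  have "M * \<bar>r2 - R2\<bar> \<le> M * (N * \<bar>r1 - R1\<bar>)"
    by (rule mult_left_mono[OF contract2 M(1)])
  with contract1 have "(1 - M * N) * \<bar>r1 - R1\<bar> \<le> 0"
    by (simp add: algebra_simps)
  with denom_pos have "r1 = R1"
    by (simp add: mult_le_0_iff)
  then have "r2 = R2"
    using r(2) clearing_debt_fixpoint_swap[of y x] by (simp add: R1_def R2_def)
  with \<open>r1 = R1\<close> show "c = (clearing_equity M N d e x y, clearing_equity N M e d y x,
      clearing_debt M N d e x y, clearing_debt N M e d y x)"
    by (simp add: c s clearing_equity_def R1_def R2_def)
qed

lemma clearing_debt_bounds:
  assumes "0 \<le> x" "0 \<le> y"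
  shows "0 \<le> clearing_debt M N d e x y" "clearing_debt M N d e x y \<le> d"
  using assms M N d e denom_pos by (simp_all add: clearing_debt_def)

lemma clearing_debt_mono_other:
  assumes "y \<le> y'"
  shows "clearing_debt M N d e x y \<le> clearing_debt M N d e x y'"
  unfolding clearing_debt_def
  by (intro min.mono order_refl divide_right_mono add_left_mono mult_left_mono)
    (use assms M denom_pos in auto)

lemma clearing_debt_lipschitz_own:
  "\<bar>clearing_debt M N d e x y - clearing_debt M N d e x' y\<bar> \<le> \<bar>x - x'\<bar> / (1 - M * N)"
proof -
  have "\<bar>clearing_debt M N d e x y - clearing_debt M N d e x' y\<bar>
      \<le> \<bar>min (x + M * e) ((x + M * y) / (1 - M * N)) - min (x' + M * e) ((x' + M * y) / (1 - M * N))\<bar>"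
    using abs_min_diff_le[of d _ d] by (simp add: clearing_debt_def)
  also have "\<dots> \<le> max \<bar>x - x'\<bar> \<bar>(x + M * y) / (1 - M * N) - (x' + M * y) / (1 - M * N)\<bar>"
    using abs_min_diff_le[of "x + M * e" _ "x' + M * e"] by simp
  also have "\<dots> \<le> \<bar>x - x'\<bar> / (1 - M * N)"
  proof -
    have "\<bar>x - x'\<bar> \<le> \<bar>x - x'\<bar> / (1 - M * N)"
      using denom_pos M N by (simp add: le_divide_eq mult_left_le)
    moreover have "\<bar>(x + M * y) / (1 - M * N) - (x' + M * y) / (1 - M * N)\<bar> = \<bar>x - x'\<bar> / (1 - M * N)"
      using denom_pos by (simp add: diff_divide_distrib[symmetric])
    ultimately show ?thesis by simp
  qed
  finally show ?thesis .
qed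

lemma clearing_debt_eq_face_value:
  assumes "d \<le> x" "0 \<le> y"
  shows "clearing_debt M N d e x y = d"
proof -
  have "x \<le> (x + M * y) / (1 - M * N)"
    using assms M N d denom_pos by (simp add: le_divide_eq mult_left_le add_increasing2)
  moreover have "0 \<le> M * e" using M e by simp
  ultimately show ?thesis using assms by (simp add: clearing_debt_def)
qed

lemma clearing_equity_bounds:
  assumes "0 \<le> x" "0 \<le> y"
  shows "0 \<le> clearing_equity M N d e x y" "x - d \<le> clearing_equity M N d e x y"
    "clearing_equity M N d e x y \<le> x + e"
proof -
  interpret other: debt_network N M e d by (rule swap)
  have "0 \<le> clearing_debt N M e d y x" "clearing_debt N M e d y x \<le> e"
    using other.clearing_debt_bounds assms by simp_all
  moreover have "M * clearing_debt N M e d y x \<le> clearing_debt N M e d y x"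
    using calculation M by (simp add: mult_left_le_one_le)
  ultimately have "0 \<le> M * clearing_debt N M e d y x" "M * clearing_debt N M e d y x \<le> e"
    using M by simp_all
  then show "0 \<le> clearing_equity M N d e x y" "x - d \<le> clearing_equity M N d e x y"
    "clearing_equity M N d e x y \<le> x + e"
    using d assms unfolding clearing_equity_def by auto
qed

lemma clearing_equity_increment_own:
  assumes "0 \<le> x" "0 \<le> y" "x \<le> x'"
  shows "clearing_equity M N d e x y \<le> clearing_equity M N d e x' y"
    and "d \<le> x \<Longrightarrow> x' - x \<le> clearing_equity M N d e x' y - clearing_equity M N d e x y"
proof -
  interpret other: debt_network N M e d by (rule swap)
  have "M * clearing_debt N M e d y x \<le> M * clearing_debt N M e d y x'"
    using other.clearing_debt_mono_other assms M by (simp add: mult_left_mono)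
  moreover have "0 \<le> M * clearing_debt N M e d y x"
    using other.clearing_debt_bounds[of y x] assms M by simp
  ultimately show "clearing_equity M N d e x y \<le> clearing_equity M N d e x' y"
    and "d \<le> x \<Longrightarrow> x' - x \<le> clearing_equity M N d e x' y - clearing_equity M N d e x y"
    using assms unfolding clearing_equity_def by auto
qed

lemma clearing_equity_lipschitz_other:
  "\<bar>clearing_equity M N d e x y - clearing_equity M N d e x y'\<bar> \<le> M / (1 - N * M) * \<bar>y - y'\<bar>"
proof -
  interpret other: debt_network N M e d by (rule swap)
  have "\<bar>M * clearing_debt N M e d y x - M * clearing_debt N M e d y' x\<bar>
      = M * \<bar>clearing_debt N M e d y x - clearing_debt N M e d y' x\<bar>"
    using M by (simp add: right_diff_distrib[symmetric] abs_mult)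
  also have "\<dots> \<le> M * (\<bar>y - y'\<bar> / (1 - N * M))"
    by (rule mult_left_mono[OF other.clearing_debt_lipschitz_own M(1)])
  finally have "\<bar>M * clearing_debt N M e d y x - M * clearing_debt N M e d y' x\<bar>
      \<le> M / (1 - N * M) * \<bar>y - y'\<bar>" by simp
  moreover have "\<bar>clearing_equity M N d e x y - clearing_equity M N d e x y'\<bar>
      \<le> \<bar>M * clearing_debt N M e d y x - M * clearing_debt N M e d y' x\<bar>"
    using abs_max_diff_le[of 0 "x + M * clearing_debt N M e d y x - d" 0] by (simp add: clearing_equity_def)
  ultimately show ?thesis by linarith
qed

lemma clearing_equity_saturated_other:
  assumes "0 \<le> x" "e \<le> y" "e \<le> y'"
  shows "clearing_equity M N d e x y = clearing_equity M N d e x y'"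
  using debt_network.clearing_debt_eq_face_value[OF swap] assms by (simp add: clearing_equity_def)

end

section \<open>Derivatives and integrals\<close>

lemma has_real_derivative_integral:
  fixes f f' :: "real \<Rightarrow> 'a \<Rightarrow> real"
  assumes integrable: "\<And>u. integrable M (f u)"
    and derivative: "\<And>u w. ((\<lambda>u. f u w) has_real_derivative f' u w) (at u)"
    and dominated: "\<And>T. \<exists>g. integrable M g \<and> (\<forall>u w. \<bar>u\<bar> \<le> T \<longrightarrow> \<bar>f' u w\<bar> \<le> g w)"
  shows "((\<lambda>u. \<integral>w. f u w \<partial>M) has_real_derivative (\<integral>w. f' t w \<partial>M)) (at t)"
  unfolding has_field_derivative_iff tendsto_at_iff_sequentially
proof (intro allI impI)
  fix X :: "nat \<Rightarrow> real"
  assume X: "\<forall>i. X i \<in> UNIV - {t}" and "X \<longlonglongrightarrow> t"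
  then obtain B where B: "\<And>i. \<bar>X i\<bar> \<le> B"
    by (metis BseqE convergent_imp_Bseq convergentI real_norm_def)
  define T where "T = max B \<bar>t\<bar>"
  obtain g where g: "integrable M g" and bound: "\<And>u w. \<bar>u\<bar> \<le> T \<Longrightarrow> \<bar>f' u w\<bar> \<le> g w"
    using dominated[of T] by blast
  define q where "q i w = (f (X i) w - f t w) / (X i - t)" for i w
  have q_measurable: "q i \<in> borel_measurable M" for i
    unfolding q_def using integrable by (intro borel_measurable_divide borel_measurable_diff) auto
  have q_lim: "(\<lambda>i. q i w) \<longlonglongrightarrow> f' t w" for w
  proof -
    have "((\<lambda>u. (f u w - f t w) / (u - t)) \<longlongrightarrow> f' t w) (at t)"
      using derivative[of w t] unfolding has_field_derivative_iff .
    then show ?thesis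
      unfolding q_def tendsto_at_iff_sequentially comp_def using X \<open>X \<longlonglongrightarrow> t\<close> by blast
  qed
  have "(\<lambda>i. \<integral>w. q i w \<partial>M) \<longlonglongrightarrow> (\<integral>w. f' t w \<partial>M)"
  proof (rule integral_dominated_convergence[where w = g])
    show "f' t \<in> borel_measurable M"
      by (rule borel_measurable_LIMSEQ_real[OF q_lim q_measurable])
    show "AE w in M. norm (q i w) \<le> g w" for i
    proof (rule AE_I2)
      fix w
      have "norm (f (X i) w - f t w) \<le> g w * norm (X i - t)"
        by (rule field_differentiable_bound[where S = "{-T..T}" and f' = "\<lambda>u. f' u w"])
          (use B[of i] bound derivative in \<open>auto simp: T_def intro: has_field_derivative_at_within\<close>)
      then show "norm (q i w) \<le> g w"
        using X by (simp add: q_def divide_le_eq abs_divide)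
    qed
  qed (use q_measurable q_lim g in auto)
  moreover have "(\<integral>w. q i w \<partial>M) = ((\<integral>w. f (X i) w \<partial>M) - (\<integral>w. f t w \<partial>M)) / (X i - t)" for i
    using integrable[of "X i"] integrable[of t] by (simp add: q_def)
  ultimately show "((\<lambda>u. ((\<integral>w. f u w \<partial>M) - (\<integral>w. f t w \<partial>M)) / (u - t)) \<circ> X)
      \<longlonglongrightarrow> (\<integral>w. f' t w \<partial>M)"
    by (simp add: comp_def)
qed

lemma DERIV_ge_of_increment_ge:
  fixes f :: "real \<Rightarrow> real"
  assumes "(f has_real_derivative D) (at x)" and "\<And>h. 0 < h \<Longrightarrow> L * h \<le> f (x + h) - f x"
  shows "L \<le> D"
proof (rule tendsto_lowerbound)
  show "((\<lambda>y. (f y - f x) / (y - x)) \<longlongrightarrow> D) (at_right x)"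
    using assms(1) unfolding has_field_derivative_iff by (rule tendsto_mono[OF at_within_le_at])
  show "\<forall>\<^sub>F y in at_right x. L \<le> (f y - f x) / (y - x)"
    using eventually_at_right_less[of x]
  proof eventually_elim
    case (elim y)
    then have "L * (y - x) \<le> f y - f x" using assms(2)[of "y - x"] by simp
    with elim show ?case by (simp add: le_divide_eq)
  qed
qed simp

lemma DERIV_abs_le_of_increment_le:
  fixes f :: "real \<Rightarrow> real"
  assumes "(f has_real_derivative D) (at x)" and "\<And>h. 0 < h \<Longrightarrow> \<bar>f (x + h) - f x\<bar> \<le> L * h"
  shows "\<bar>D\<bar> \<le> L"
proof (rule tendsto_upperbound)
  show "((\<lambda>y. \<bar>(f y - f x) / (y - x)\<bar>) \<longlongrightarrow> \<bar>D\<bar>) (at_right x)"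
    using assms(1) unfolding has_field_derivative_iff
    by (rule tendsto_rabs[OF tendsto_mono[OF at_within_le_at]])
  show "\<forall>\<^sub>F y in at_right x. \<bar>(f y - f x) / (y - x)\<bar> \<le> L"
    using eventually_at_right_less[of x]
  proof eventually_elim
    case (elim y)
    then have "\<bar>f y - f x\<bar> \<le> L * (y - x)" using assms(2)[of "y - x"] by simp
    with elim show ?case by (simp add: abs_divide divide_le_eq)
  qed
qed simp

lemma has_real_derivative_exp_reparam:
  assumes "\<And>t. f (exp t) = g t" and "(g has_real_derivative D) (at (ln x))" and "0 < x"
  shows "(f has_real_derivative D * inverse x) (at x)"
proof -
  have "((\<lambda>u. g (ln u)) has_real_derivative D * inverse x) (at x)"
    using DERIV_chain2[OF assms(2) DERIV_ln[OF assms(3)]] .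
  then show ?thesis
    by (rule has_field_derivative_transform_within_open[where S = "{0<..}"])
      (use assms(3) in \<open>auto simp flip: assms(1)\<close>)
qed

lemma integral_pos_of_pos_on_open:
  fixes f :: "'a :: euclidean_space \<Rightarrow> real"
  assumes "integrable lborel f" "\<And>z. 0 \<le> f z" "open S" "S \<noteq> {}" "\<And>z. z \<in> S \<Longrightarrow> 0 < f z"
  shows "0 < (\<integral>z. f z \<partial>lborel)"
proof -
  have "(\<integral>z. f z \<partial>lborel) \<noteq> 0"
  proof
    assume "(\<integral>z. f z \<partial>lborel) = 0"
    then have "AE z in lborel. f z = 0"
      using integral_nonneg_eq_0_iff_AE[OF assms(1)] assms(2) by simp
    then have "AE z in lborel. z \<notin> S"
      by eventually_elim (use assms(5) in force)
    then have "S \<in> null_sets lborel"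
      using AE_iff_measurable[of S lborel "\<lambda>z. z \<notin> S"] assms(3) by auto
    then have "negligible S"
      by (simp add: negligible_iff_null_sets null_sets_completionI)
    with open_not_negligible[OF assms(3,4)] show False ..
  qed
  with assms(2) show ?thesis
    by (simp add: order_less_le)
qed

section \<open>Shifted Gaussian integrals\<close>

definition std_normal_density2 :: "real \<times> real \<Rightarrow> real" where
  "std_normal_density2 z = std_normal_density (fst z) * std_normal_density (snd z)"

lemma std_normal_density2_pos: "0 < std_normal_density2 z"
  by (simp add: std_normal_density2_def normal_density_pos)

lemma std_normal_density2_shift_measurable [measurable]:
  "(\<lambda>z. std_normal_density2 (z - a)) \<in> borel_measurable borel"
  unfolding std_normal_density2_def std_normal_density_def
  by (auto intro!: borel_measurable_continuous_onI continuous_intros)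

lemma std_normal_density2_measurable [measurable]: "std_normal_density2 \<in> borel_measurable borel"
  using std_normal_density2_shift_measurable[of 0] by simp

lemma integrable_product_fun:
  fixes f g :: "real \<Rightarrow> real"
  assumes f: "integrable lborel f" and g: "integrable lborel g"
  shows "integrable (lborel :: (real \<times> real) measure) (\<lambda>z. f (fst z) * g (snd z))"
    and "(\<integral>z. f (fst z) * g (snd z) \<partial>(lborel :: (real \<times> real) measure)) = (\<integral>x. f x \<partial>lborel) * (\<integral>y. g y \<partial>lborel)"
proof -
  have [measurable]: "f \<in> borel_measurable borel" "g \<in> borel_measurable borel"
    using f g by auto
  have "(\<integral>\<^sup>+ z. ennreal (norm (f (fst z) * g (snd z))) \<partial>(lborel \<Otimes>\<^sub>M lborel))
      = (\<integral>\<^sup>+ x. ennreal (norm (f x)) \<partial>lborel) * (\<integral>\<^sup>+ y. ennreal (norm (g y)) \<partial>lborel)"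
    by (subst lborel.nn_integral_fst[symmetric])
      (auto simp: abs_mult ennreal_mult nn_integral_cmult nn_integral_multc)
  also have "\<dots> < \<infinity>"
    using f g by (simp add: integrable_iff_bounded ennreal_mult_less_top)
  finally have int: "integrable (lborel \<Otimes>\<^sub>M lborel) (\<lambda>z. f (fst z) * g (snd z))"
    by (intro integrableI_bounded) auto
  then show "integrable (lborel :: (real \<times> real) measure) (\<lambda>z. f (fst z) * g (snd z))"
    by (simp add: lborel_prod)
  have "(\<integral>z. f (fst z) * g (snd z) \<partial>(lborel \<Otimes>\<^sub>M lborel)) = (\<integral>x. \<integral>y. f x * g y \<partial>lborel \<partial>lborel)"
    using lborel_pair.integral_fst[of "\<lambda>x y. f x * g y"] int by (simp add: case_prod_beta')
  then show "(\<integral>z. f (fst z) * g (snd z) \<partial>(lborel :: (real \<times> real) measure)) = (\<integral>x. f x \<partial>lborel) * (\<integral>y. g y \<partial>lborel)"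
    by (simp add: lborel_prod)
qed

lemma integrable_std_normal_density2: "integrable lborel std_normal_density2"
  and integral_std_normal_density2: "(\<integral>z. std_normal_density2 z \<partial>lborel) = 1"
  using integrable_product_fun[of std_normal_density std_normal_density]
  by (simp_all add: std_normal_density2_def[abs_def])

lemma integral_lborel_translate:
  fixes F :: "'a :: euclidean_space \<Rightarrow> real"
  assumes "F \<in> borel_measurable borel"
  shows "(\<integral>z. F z \<partial>lborel) = (\<integral>z. F (c + z) \<partial>lborel)"
proof -
  have "(\<integral>z. F z \<partial>lborel) = (\<integral>z. F z \<partial>distr lborel borel ((+) c))"
    by (simp add: lborel_distr_plus)
  also have "\<dots> = (\<integral>z. F (c + z) \<partial>lborel)"
    by (rule integral_distr) (use assms in auto)
  finally show ?thesis .
qed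

definition gaussian_majorant :: "real \<Rightarrow> real \<Rightarrow> real" where
  "gaussian_majorant k x = (1 + \<bar>x\<bar>) * exp (- x\<^sup>2 / 4 + k * \<bar>x\<bar>)"

lemma gaussian_majorant_eq: "gaussian_majorant k x = (1 + \<bar>x\<bar>) * exp (- x\<^sup>2 / 4) * exp (k * \<bar>x\<bar>)"
  by (simp add: gaussian_majorant_def mult.assoc flip: exp_add)

lemma exp_quadratic_eq_normal_density:
  "exp (- x\<^sup>2 / 4 + k * x) = exp (k\<^sup>2) * sqrt (4 * pi) * normal_density (2 * k) (sqrt 2) x"
proof -
  have "- x\<^sup>2 / 4 + k * x = k\<^sup>2 + (- (x - 2 * k)\<^sup>2 / (2 * (sqrt 2)\<^sup>2))"
    by (simp add: power2_eq_square field_simps)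
  moreover have "sqrt (2 * pi * (sqrt 2)\<^sup>2) = sqrt (4 * pi)" by simp
  ultimately show ?thesis
    by (simp add: normal_density_def flip: exp_add)
qed

text \<open>Dominated by two normal densities centred at \<open>\<plusminus>2k\<close> and their first absolute moments.\<close>
lemma integrable_gaussian_majorant:
  assumes k: "0 \<le> k"
  shows "integrable lborel (gaussian_majorant k)"
proof (rule Bochner_Integration.integrable_bound)
  define A where "A = exp (k\<^sup>2) * sqrt (4 * pi) * (1 + 2 * k)"
  define G where "G x = A * (normal_density (2 * k) (sqrt 2) x * (1 + \<bar>x - 2 * k\<bar>)
      + normal_density (- 2 * k) (sqrt 2) x * (1 + \<bar>x - (- 2 * k)\<bar>))" for x
  have "integrable lborel (\<lambda>x. normal_density c (sqrt 2) x * (1 + \<bar>x - c\<bar>))" for c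
    using integrable_normal_moment_abs[where \<mu> = c and \<sigma> = "sqrt 2" and k = 1]
    by (auto intro!: Bochner_Integration.integrable_add simp: distrib_left)
  then show "integrable lborel G"
    unfolding G_def by (intro Bochner_Integration.integrable_mult_right Bochner_Integration.integrable_add)
  show "AE x in lborel. norm (gaussian_majorant k x) \<le> norm (G x)"
  proof (rule AE_I2)
    fix x :: real
    have shift: "1 + \<bar>x\<bar> \<le> (1 + 2 * k) * (1 + \<bar>x - c\<bar>)" if "\<bar>c\<bar> = 2 * k" for c
    proof -
      have "1 + \<bar>x\<bar> \<le> 1 + 2 * k + \<bar>x - c\<bar>" using that by linarith
      also have "\<dots> \<le> (1 + 2 * k) * (1 + \<bar>x - c\<bar>)" using k by (simp add: algebra_simps)
      finally show ?thesis .
    qed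
    have "exp (- x\<^sup>2 / 4 + k * \<bar>x\<bar>) \<le> exp (- x\<^sup>2 / 4 + k * x) + exp (- x\<^sup>2 / 4 + (- k) * x)"
      by (cases "0 \<le> x") (simp_all add: add_increasing add_increasing2)
    then have "gaussian_majorant k x
        \<le> (1 + \<bar>x\<bar>) * exp (- x\<^sup>2 / 4 + k * x) + (1 + \<bar>x\<bar>) * exp (- x\<^sup>2 / 4 + (- k) * x)"
      unfolding gaussian_majorant_def by (simp add: distrib_left[symmetric] mult_left_mono)
    also have "\<dots> \<le> ((1 + 2 * k) * (1 + \<bar>x - 2 * k\<bar>)) * exp (- x\<^sup>2 / 4 + k * x)
        + ((1 + 2 * k) * (1 + \<bar>x - (- 2 * k)\<bar>)) * exp (- x\<^sup>2 / 4 + (- k) * x)"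
      using k by (intro add_mono mult_right_mono shift) simp_all
    also have "\<dots> = G x"
      using k unfolding G_def A_def exp_quadratic_eq_normal_density by (simp add: algebra_simps)
    finally show "norm (gaussian_majorant k x) \<le> norm (G x)"
      by (simp add: gaussian_majorant_def)
  qed
qed (unfold gaussian_majorant_def, measurable)

lemma std_normal_density_shift_le:
  assumes "\<bar>c\<bar> \<le> R"
  shows "(1 + \<bar>x - c\<bar>) * std_normal_density (x - c) \<le> exp (R\<^sup>2 / 2) * (1 + R) * ((1 + \<bar>x\<bar>) * exp (- x\<^sup>2 / 4))"
proof -
  have "x\<^sup>2 \<le> 2 * (x - c)\<^sup>2 + 2 * c\<^sup>2"
    using zero_le_power2[of "x - 2 * c"] by (simp add: power2_eq_square algebra_simps)
  moreover have "c\<^sup>2 \<le> R\<^sup>2"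
    using assms by (metis abs_ge_zero abs_le_square_iff abs_of_nonneg order_trans)
  ultimately have "exp (- (x - c)\<^sup>2 / 2) \<le> exp (R\<^sup>2 / 2) * exp (- x\<^sup>2 / 4)"
    by (simp add: exp_add[symmetric])
  moreover have "std_normal_density (x - c) \<le> exp (- (x - c)\<^sup>2 / 2)"
    using pi_gt3 by (simp add: std_normal_density_def divide_le_eq)
  ultimately have "std_normal_density (x - c) \<le> exp (R\<^sup>2 / 2) * exp (- x\<^sup>2 / 4)"
    by linarith
  moreover have "1 + \<bar>x - c\<bar> \<le> (1 + R) * (1 + \<bar>x\<bar>)"
  proof -
    have "0 \<le> R * \<bar>x\<bar>" using assms by simp
    moreover have "(1 + R) * (1 + \<bar>x\<bar>) = 1 + R + \<bar>x\<bar> + R * \<bar>x\<bar>" by (simp add: algebra_simps)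
    ultimately show ?thesis using assms abs_triangle_ineq4[of x c] by linarith
  qed
  ultimately have "(1 + \<bar>x - c\<bar>) * std_normal_density (x - c)
      \<le> ((1 + R) * (1 + \<bar>x\<bar>)) * (exp (R\<^sup>2 / 2) * exp (- x\<^sup>2 / 4))"
    using assms by (intro mult_mono) auto
  then show ?thesis by (simp only: mult_ac)
qed

lemma has_real_derivative_std_normal_density_shift:
  "((\<lambda>t. std_normal_density (a - t * p)) has_real_derivative
      std_normal_density (a - t * p) * ((a - t * p) * p)) (at t)"
proof -
  have "((\<lambda>t. exp (- (a - t * p)\<^sup>2 / 2)) has_real_derivative
      exp (- (a - t * p)\<^sup>2 / 2) * ((a - t * p) * p)) (at t)"
    by (auto intro!: derivative_eq_intros simp: power2_eq_square)
  from DERIV_cmult[OF this, of "1 / sqrt (2 * pi)"] show ?thesis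
    by (simp add: std_normal_density_def mult_ac)
qed

lemma has_real_derivative_std_normal_density2_shift:
  "((\<lambda>t. std_normal_density2 (z - t *\<^sub>R c)) has_real_derivative
      std_normal_density2 (z - t *\<^sub>R c) * inner (z - t *\<^sub>R c) c) (at t)"
proof -
  obtain z1 z2 c1 c2 where z: "z = (z1, z2)" and c: "c = (c1, c2)" by fastforce
  have density: "std_normal_density2 (z - t *\<^sub>R c)
      = std_normal_density (z1 - t * c1) * std_normal_density (z2 - t * c2)" for t
    by (simp add: z c std_normal_density2_def)
  have inner: "inner (z - t *\<^sub>R c) c = (z1 - t * c1) * c1 + (z2 - t * c2) * c2"
    by (simp add: z c)
  show ?thesis
    unfolding density inner
    by (rule DERIV_cong[OF DERIV_mult[OF has_real_derivative_std_normal_density_shift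
          has_real_derivative_std_normal_density_shift]]) (simp add: algebra_simps)
qed

lemma std_normal_density2_shift_le:
  fixes c z :: "real \<times> real"
  assumes "\<bar>t\<bar> \<le> T"
  defines "L \<equiv> \<bar>fst c\<bar> + \<bar>snd c\<bar>"
  shows "std_normal_density2 (z - t *\<^sub>R c) * (1 + \<bar>inner (z - t *\<^sub>R c) c\<bar>)
    \<le> (1 + L) * (exp ((L * T)\<^sup>2 / 2) * (1 + L * T))\<^sup>2
       * ((1 + \<bar>fst z\<bar>) * exp (- (fst z)\<^sup>2 / 4)) * ((1 + \<bar>snd z\<bar>) * exp (- (snd z)\<^sup>2 / 4))"
proof -
  define u v where "u = fst z - t * fst c" and "v = snd z - t * snd c"
  have shift: "\<bar>t * fst c\<bar> \<le> L * T" "\<bar>t * snd c\<bar> \<le> L * T"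
    using assms(1) by (simp_all add: abs_mult mult.commute[of "\<bar>t\<bar>"] L_def mult_mono)
  have L: "0 \<le> L" by (simp add: L_def)
  have T: "0 \<le> T" using assms(1) by linarith
  have "inner (z - t *\<^sub>R c) c = u * fst c + v * snd c"
    by (simp add: inner_prod_def u_def v_def)
  then have "\<bar>inner (z - t *\<^sub>R c) c\<bar> \<le> \<bar>u\<bar> * \<bar>fst c\<bar> + \<bar>v\<bar> * \<bar>snd c\<bar>"
    by (metis abs_mult abs_triangle_ineq)
  also have "\<dots> \<le> L * \<bar>u\<bar> + L * \<bar>v\<bar>"
  proof -
    have "0 \<le> \<bar>u\<bar> * \<bar>snd c\<bar>" "0 \<le> \<bar>v\<bar> * \<bar>fst c\<bar>" by simp_all
    then show ?thesis by (simp add: L_def algebra_simps)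
  qed
  also have "\<dots> \<le> (1 + L) * (1 + \<bar>u\<bar>) * (1 + \<bar>v\<bar>) - 1"
    using L by (simp add: algebra_simps add_increasing)
  finally have "std_normal_density2 (z - t *\<^sub>R c) * (1 + \<bar>inner (z - t *\<^sub>R c) c\<bar>)
      \<le> std_normal_density2 (z - t *\<^sub>R c) * ((1 + L) * (1 + \<bar>u\<bar>) * (1 + \<bar>v\<bar>))"
    using std_normal_density2_pos[of "z - t *\<^sub>R c"] by (simp add: mult_left_mono)
  also have "\<dots> = (1 + L) * ((1 + \<bar>u\<bar>) * std_normal_density u) * ((1 + \<bar>v\<bar>) * std_normal_density v)"
    by (simp add: std_normal_density2_def u_def v_def mult_ac)
  also have "\<dots> \<le> (1 + L) * (exp ((L * T)\<^sup>2 / 2) * (1 + L * T) * ((1 + \<bar>fst z\<bar>) * exp (- (fst z)\<^sup>2 / 4)))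
      * (exp ((L * T)\<^sup>2 / 2) * (1 + L * T) * ((1 + \<bar>snd z\<bar>) * exp (- (snd z)\<^sup>2 / 4)))"
  proof -
    have "(1 + L) * ((1 + \<bar>u\<bar>) * std_normal_density u)
        \<le> (1 + L) * (exp ((L * T)\<^sup>2 / 2) * (1 + L * T) * ((1 + \<bar>fst z\<bar>) * exp (- (fst z)\<^sup>2 / 4)))"
      using std_normal_density_shift_le[OF shift(1)] L unfolding u_def by (simp add: mult_left_mono)
    then show ?thesis
      using std_normal_density_shift_le[OF shift(2), of "snd z"] unfolding v_def
      by (rule mult_mono) (use L T in simp_all)
  qed
  finally show ?thesis by (simp add: power2_eq_square mult_ac)
qed

lemma gaussian_shift_integrand_dominated:
  fixes F :: "real \<times> real \<Rightarrow> real"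
  assumes F: "\<And>z. \<bar>F z\<bar> \<le> K * exp (k * (\<bar>fst z\<bar> + \<bar>snd z\<bar>))"
  obtains C where "\<And>t z. \<bar>t\<bar> \<le> T \<Longrightarrow>
    \<bar>std_normal_density2 (z - t *\<^sub>R c) * F z\<bar> * (1 + \<bar>inner (z - t *\<^sub>R c) c\<bar>)
      \<le> C * (gaussian_majorant k (fst z) * gaussian_majorant k (snd z))"
proof
  define L where "L = \<bar>fst c\<bar> + \<bar>snd c\<bar>"
  fix t z assume t: "\<bar>t\<bar> \<le> T"
  have "\<bar>std_normal_density2 (z - t *\<^sub>R c) * F z\<bar> * (1 + \<bar>inner (z - t *\<^sub>R c) c\<bar>)
      = std_normal_density2 (z - t *\<^sub>R c) * (1 + \<bar>inner (z - t *\<^sub>R c) c\<bar>) * \<bar>F z\<bar>"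
    using std_normal_density2_pos[of "z - t *\<^sub>R c"] by (simp add: abs_mult)
  also have "\<dots> \<le> ((1 + L) * (exp ((L * T)\<^sup>2 / 2) * (1 + L * T))\<^sup>2
       * ((1 + \<bar>fst z\<bar>) * exp (- (fst z)\<^sup>2 / 4)) * ((1 + \<bar>snd z\<bar>) * exp (- (snd z)\<^sup>2 / 4)))
      * (K * exp (k * (\<bar>fst z\<bar> + \<bar>snd z\<bar>)))"
    using std_normal_density2_shift_le[OF t, of z c] F[of z] unfolding L_def
    by (rule mult_mono) simp_all
  also have "\<dots> = ((1 + L) * (exp ((L * T)\<^sup>2 / 2) * (1 + L * T))\<^sup>2 * K)
      * (gaussian_majorant k (fst z) * gaussian_majorant k (snd z))"
  proof -
    have "exp (k * (\<bar>fst z\<bar> + \<bar>snd z\<bar>)) = exp (k * \<bar>fst z\<bar>) * exp (k * \<bar>snd z\<bar>)"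
      by (simp add: distrib_left exp_add)
    then show ?thesis
      unfolding gaussian_majorant_eq by (simp only: mult_ac)
  qed
  finally show "\<bar>std_normal_density2 (z - t *\<^sub>R c) * F z\<bar> * (1 + \<bar>inner (z - t *\<^sub>R c) c\<bar>)
      \<le> ((1 + L) * (exp ((L * T)\<^sup>2 / 2) * (1 + L * T))\<^sup>2 * K)
        * (gaussian_majorant k (fst z) * gaussian_majorant k (snd z))" .
qed

lemma abs_le_of_abs_mult_one_plus_abs_le:
  fixes a b c :: real
  assumes "\<bar>a\<bar> * (1 + \<bar>b\<bar>) \<le> c"
  shows "\<bar>a\<bar> \<le> c" and "\<bar>a * b\<bar> \<le> c"
proof -
  have "\<bar>a\<bar> \<le> \<bar>a\<bar> * (1 + \<bar>b\<bar>)" "\<bar>a * b\<bar> \<le> \<bar>a\<bar> * (1 + \<bar>b\<bar>)"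
    by (simp_all add: abs_mult algebra_simps)
  with assms show "\<bar>a\<bar> \<le> c" and "\<bar>a * b\<bar> \<le> c" by linarith+
qed

lemma integrable_gaussian_majorant2:
  assumes k: "0 \<le> k"
  shows "integrable lborel (\<lambda>z :: real \<times> real. C * (gaussian_majorant k (fst z) * gaussian_majorant k (snd z)))"
  using integrable_product_fun(1)[OF integrable_gaussian_majorant[OF k] integrable_gaussian_majorant[OF k]]
  by (rule Bochner_Integration.integrable_mult_right)

context
  fixes F :: "real \<times> real \<Rightarrow> real" and K k :: real
  assumes F_measurable [measurable]: "F \<in> borel_measurable borel"
    and F_bound: "\<And>z. \<bar>F z\<bar> \<le> K * exp (k * (\<bar>fst z\<bar> + \<bar>snd z\<bar>))"
    and k: "0 \<le> k"
begin

lemma integrable_gaussian_shift: "integrable lborel (\<lambda>z. std_normal_density2 (z - t *\<^sub>R c) * F z)"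
proof -
  obtain C where C: "\<And>u z. \<bar>u\<bar> \<le> \<bar>t\<bar> \<Longrightarrow>
      \<bar>std_normal_density2 (z - u *\<^sub>R c) * F z\<bar> * (1 + \<bar>inner (z - u *\<^sub>R c) c\<bar>)
        \<le> C * (gaussian_majorant k (fst z) * gaussian_majorant k (snd z))"
    using gaussian_shift_integrand_dominated[OF F_bound, of "\<bar>t\<bar>" c] by metis
  show ?thesis
  proof (rule Bochner_Integration.integrable_bound[OF integrable_gaussian_majorant2[OF k]])
    show "(\<lambda>z. std_normal_density2 (z - t *\<^sub>R c) * F z) \<in> borel_measurable lborel"
      by simp
    show "AE z in lborel. norm (std_normal_density2 (z - t *\<^sub>R c) * F z)
        \<le> norm (C * (gaussian_majorant k (fst z) * gaussian_majorant k (snd z)))"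
    proof (rule AE_I2)
      fix z
      have "\<bar>std_normal_density2 (z - t *\<^sub>R c) * F z\<bar>
          \<le> C * (gaussian_majorant k (fst z) * gaussian_majorant k (snd z))"
        by (rule abs_le_of_abs_mult_one_plus_abs_le(1)[OF C[OF order_refl]])
      then show "norm (std_normal_density2 (z - t *\<^sub>R c) * F z)
          \<le> norm (C * (gaussian_majorant k (fst z) * gaussian_majorant k (snd z)))"
        by simp
    qed
  qed
qed

lemma gaussian_shift_integral_differentiable:
  "\<exists>D. ((\<lambda>t. \<integral>z. std_normal_density2 (z - t *\<^sub>R c) * F z \<partial>lborel) has_real_derivative D) (at t)"
proof -
  define g' where "g' u z = std_normal_density2 (z - u *\<^sub>R c) * inner (z - u *\<^sub>R c) c * F z" for u z
  have "((\<lambda>t. \<integral>z. std_normal_density2 (z - t *\<^sub>R c) * F z \<partial>lborel) has_real_derivative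
      (\<integral>z. g' t z \<partial>lborel)) (at t)"
  proof (rule has_real_derivative_integral)
    show "integrable lborel (\<lambda>z. std_normal_density2 (z - u *\<^sub>R c) * F z)" for u
      by (rule integrable_gaussian_shift)
    show "((\<lambda>u. std_normal_density2 (z - u *\<^sub>R c) * F z) has_real_derivative g' u z) (at u)" for u z
      using DERIV_mult[OF has_real_derivative_std_normal_density2_shift DERIV_const[of "F z"]]
      by (simp add: g'_def)
    fix T
    obtain C where C: "\<And>u z. \<bar>u\<bar> \<le> T \<Longrightarrow>
        \<bar>std_normal_density2 (z - u *\<^sub>R c) * F z\<bar> * (1 + \<bar>inner (z - u *\<^sub>R c) c\<bar>)
          \<le> C * (gaussian_majorant k (fst z) * gaussian_majorant k (snd z))"
      using gaussian_shift_integrand_dominated[OF F_bound, of T c] by metis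
    have "\<bar>g' u z\<bar> \<le> C * (gaussian_majorant k (fst z) * gaussian_majorant k (snd z))"
      if "\<bar>u\<bar> \<le> T" for u z
      using abs_le_of_abs_mult_one_plus_abs_le(2)[OF C[OF that, of z]] by (simp only: g'_def mult_ac)
    then show "\<exists>g. integrable lborel g \<and> (\<forall>u z. \<bar>u\<bar> \<le> T \<longrightarrow> \<bar>g' u z\<bar> \<le> g z)"
      using integrable_gaussian_majorant2[OF k] by blast
  qed
  then show ?thesis by blast
qed

end

lemma abs_integral_le_std_normal_density2:
  assumes "integrable lborel f" "\<And>z. \<bar>f z\<bar> \<le> std_normal_density2 z * C"
  shows "\<bar>\<integral>z. f z \<partial>lborel\<bar> \<le> C"
proof -
  have "\<bar>\<integral>z. f z \<partial>lborel\<bar> \<le> (\<integral>z. \<bar>f z\<bar> \<partial>lborel)"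
    using integral_norm_bound[of lborel f] by simp
  also have "\<dots> \<le> (\<integral>z. std_normal_density2 z * C \<partial>lborel)"
    by (rule integral_mono) (use assms integrable_std_normal_density2 in auto)
  finally show ?thesis
    by (simp add: integral_std_normal_density2)
qed

section \<open>Equity values driven by lognormal assets\<close>

text \<open>Own and counterparty terminal assets are \<open>x * exp (m + \<langle>v, z\<rangle>)\<close> and
  \<open>y * exp (n + \<langle>w, z\<rangle>)\<close> for a standard normal \<open>z \<in> \<real>\<^sup>2\<close>. Since \<open>v\<close> and \<open>w\<close> are linearly
  independent, a translation of \<open>z\<close> rescales one factor and leaves the other unchanged; this moves
  the dependence on \<open>x\<close> or \<open>y\<close> into the smooth Gaussian density.\<close>
locale lognormal_debt_network = debt_network M N d e for M N d e :: real +
  fixes m n :: real and v w :: "real \<times> real"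
  assumes independent: "fst v * snd w \<noteq> snd v * fst w"
begin

definition growth_prob :: real where
  "growth_prob = (\<integral>z. std_normal_density2 z * indicator {z. 0 < m + inner v z} z \<partial>lborel)"

definition terminal_equity_at :: "real \<Rightarrow> real \<Rightarrow> real \<times> real \<Rightarrow> real" where
  "terminal_equity_at x y z =
     clearing_equity M N d e (x * exp (m + inner v z)) (y * exp (n + inner w z))"

definition equity_value :: "real \<Rightarrow> real \<Rightarrow> real" where
  "equity_value x y = (\<integral>z. std_normal_density2 z * terminal_equity_at x y z \<partial>lborel)"

lemma terminal_equity_at_measurable [measurable]: "terminal_equity_at x y \<in> borel_measurable borel"
  using denom_pos debt_network.denom_pos[OF swap]
  unfolding terminal_equity_at_def clearing_equity_def clearing_debt_def
  by (intro borel_measurable_continuous_onI) (auto intro!: continuous_intros)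

lemma integrable_growth_indicator:
  "integrable lborel (\<lambda>z. std_normal_density2 z * indicator {z. 0 < m + inner v z} z)"
proof -
  have "{z. 0 < m + inner v z} = {z. inner v z > - m}" by auto
  then have "{z. 0 < m + inner v z} \<in> sets lborel"
    using open_halfspace_gt[where a = v and b = "- m"] by simp
  from integrable_mult_indicator[OF this integrable_std_normal_density2] show ?thesis
    by (simp add: mult.commute)
qed

lemma terminal_equity_at_bound:
  assumes "0 \<le> x" "0 \<le> y"
  shows "\<bar>terminal_equity_at x y z\<bar> \<le> (x * exp \<bar>m\<bar> + e) * exp (norm v * (\<bar>fst z\<bar> + \<bar>snd z\<bar>))"
proof -
  define G where "G = exp (norm v * (\<bar>fst z\<bar> + \<bar>snd z\<bar>))"
  have "inner v z \<le> norm v * (\<bar>fst z\<bar> + \<bar>snd z\<bar>)"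
    using norm_cauchy_schwarz[of v z] norm_Pair_le[of "fst z" "snd z"]
    by (simp add: order_trans mult_left_mono)
  then have "exp (m + inner v z) \<le> exp \<bar>m\<bar> * G"
    by (simp add: G_def flip: exp_add)
  moreover have "1 \<le> G" by (simp add: G_def)
  ultimately have "x * exp (m + inner v z) \<le> x * exp \<bar>m\<bar> * G" "e \<le> e * G"
    using assms e by (simp_all add: mult_left_mono mult.assoc)
  then have "x * exp (m + inner v z) + e \<le> (x * exp \<bar>m\<bar> + e) * G"
    by (simp add: distrib_right)
  moreover have "0 \<le> terminal_equity_at x y z"
    "terminal_equity_at x y z \<le> x * exp (m + inner v z) + e"
    using clearing_equity_bounds assms by (simp_all add: terminal_equity_at_def)
  ultimately show ?thesis
    by (simp add: G_def)
qed

lemma integrable_equity_value: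
  assumes "0 \<le> x" "0 \<le> y"
  shows "integrable lborel (\<lambda>z. std_normal_density2 z * terminal_equity_at x y z)"
  using integrable_gaussian_shift[OF terminal_equity_at_measurable terminal_equity_at_bound[OF assms],
      of 0 0] by simp

lemma equity_value_shift:
  "equity_value (x * exp (t * inner v c)) (y * exp (t * inner w c))
     = (\<integral>z. std_normal_density2 (z - t *\<^sub>R c) * terminal_equity_at x y z \<partial>lborel)"
proof -
  have "terminal_equity_at (x * exp (t * inner v c)) (y * exp (t * inner w c)) (z - t *\<^sub>R c)
      = terminal_equity_at x y z" for z
    by (simp add: terminal_equity_at_def inner_diff_right mult.assoc flip: exp_add)
  moreover have "(\<lambda>z. std_normal_density2 z * terminal_equity_at X Y z) \<in> borel_measurable borel"
    for X Y
    by measurable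
  ultimately show ?thesis
    unfolding equity_value_def
    by (subst integral_lborel_translate[where c = "- t *\<^sub>R c"]) (simp_all add: add.commute)
qed

lemma equity_value_differentiable:
  assumes "0 < x" "0 < y"
  shows "\<exists>D. ((\<lambda>x. equity_value x y) has_real_derivative D) (at x)"
    and "\<exists>D. ((\<lambda>y. equity_value x y) has_real_derivative D) (at y)"
proof -
  define \<delta> where "\<delta> = fst v * snd w - snd v * fst w"
  have "\<delta> \<noteq> 0" using independent by (simp add: \<delta>_def)
  define c c' where "c = (1 / \<delta>) *\<^sub>R (snd w, - fst w)" and "c' = (1 / \<delta>) *\<^sub>R (- snd v, fst v)"
  have "inner v (snd w, - fst w) = \<delta>" "inner w (snd w, - fst w) = 0"
    "inner v (- snd v, fst v) = 0" "inner w (- snd v, fst v) = \<delta>"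
    by (simp_all add: \<delta>_def inner_prod_def algebra_simps)
  then have c: "inner v c = 1" "inner w c = 0" and c': "inner v c' = 0" "inner w c' = 1"
    using \<open>\<delta> \<noteq> 0\<close> unfolding c_def c'_def inner_scaleR_right by simp_all
  define Q Q' where
    "Q t = (\<integral>z. std_normal_density2 (z - t *\<^sub>R c) * terminal_equity_at 1 y z \<partial>lborel)" and
    "Q' t = (\<integral>z. std_normal_density2 (z - t *\<^sub>R c') * terminal_equity_at x 1 z \<partial>lborel)" for t
  have "equity_value (exp t) y = Q t" "equity_value x (exp t) = Q' t" for t
    using equity_value_shift[of 1 t c y] equity_value_shift[of x t c' 1] c c' by (simp_all add: Q_def Q'_def)
  moreover have "\<exists>D. (Q has_real_derivative D) (at (ln x))" "\<exists>D. (Q' has_real_derivative D) (at (ln y))"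
    unfolding Q_def Q'_def using assms
    by (intro gaussian_shift_integral_differentiable[OF terminal_equity_at_measurable
          terminal_equity_at_bound]; simp)+
  ultimately show "\<exists>D. ((\<lambda>x. equity_value x y) has_real_derivative D) (at x)"
    and "\<exists>D. ((\<lambda>y. equity_value x y) has_real_derivative D) (at y)"
    using has_real_derivative_exp_reparam[where f = "\<lambda>x. equity_value x y"]
      has_real_derivative_exp_reparam[where f = "\<lambda>y. equity_value x y"] assms by metis+
qed

lemma equity_value_diff:
  assumes "0 \<le> x" "0 \<le> y" "0 \<le> x'" "0 \<le> y'"
  shows "integrable lborel (\<lambda>z. std_normal_density2 z * (terminal_equity_at x' y' z - terminal_equity_at x y z))"
    and "equity_value x' y' - equity_value x y
      = (\<integral>z. std_normal_density2 z * (terminal_equity_at x' y' z - terminal_equity_at x y z) \<partial>lborel)"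
  using integrable_equity_value[of x' y'] integrable_equity_value[of x y] assms
  by (simp_all add: equity_value_def right_diff_distrib)

lemma terminal_equity_at_increment_own:
  assumes "d \<le> x" "0 \<le> y" "0 < h"
  shows "h * indicator {z. 0 < m + inner v z} z \<le> terminal_equity_at (x + h) y z - terminal_equity_at x y z"
proof -
  define E Y where "E = exp (m + inner v z)" and "Y = y * exp (n + inner w z)"
  have x: "0 \<le> x" using assms d by linarith
  have "x * E \<le> (x + h) * E" "0 \<le> Y" using assms by (simp_all add: E_def Y_def)
  have "h * indicator {z. 0 < m + inner v z} z
      \<le> clearing_equity M N d e ((x + h) * E) Y - clearing_equity M N d e (x * E) Y"
  proof (cases "0 < m + inner v z")
    case True
    then have "1 \<le> E" by (simp add: E_def)
    then have "d \<le> x * E" "h \<le> h * E" using assms x by (auto simp: mult_le_cancel_left1 order_trans)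
    then have "h \<le> clearing_equity M N d e ((x + h) * E) Y - clearing_equity M N d e (x * E) Y"
      using clearing_equity_increment_own(2)[of "x * E" Y "(x + h) * E"] x \<open>0 \<le> Y\<close>
        \<open>x * E \<le> (x + h) * E\<close> \<open>1 \<le> E\<close> by (simp add: algebra_simps)
    with True show ?thesis by simp
  next
    case False
    with clearing_equity_increment_own(1)[of "x * E" Y "(x + h) * E"] show ?thesis
      using x \<open>0 \<le> Y\<close> \<open>x * E \<le> (x + h) * E\<close> by (simp add: E_def)
  qed
  then show ?thesis by (simp add: terminal_equity_at_def E_def Y_def)
qed

lemma terminal_equity_at_increment_other:
  assumes "0 \<le> x" "0 < y" "0 < h"
  shows "\<bar>terminal_equity_at x (y + h) z - terminal_equity_at x y z\<bar> \<le> M / (1 - N * M) * e / y * h"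
proof -
  define L X H where "L = M / (1 - N * M)" and "X = x * exp (m + inner v z)" and "H = exp (n + inner w z)"
  have L: "0 \<le> L" using M debt_network.denom_pos[OF swap] by (simp add: L_def)
  have X: "0 \<le> X" using assms by (simp add: X_def)
  have H: "0 < H" by (simp add: H_def)
  have "y * H \<le> (y + h) * H" using assms H by (simp add: mult_right_mono)
  consider "e \<le> y * H" | "y * H < e" by linarith
  then have "\<bar>clearing_equity M N d e X ((y + h) * H) - clearing_equity M N d e X (y * H)\<bar> \<le> L * e / y * h"
  proof cases
    case 1
    then have "clearing_equity M N d e X ((y + h) * H) = clearing_equity M N d e X (y * H)"
      using \<open>y * H \<le> (y + h) * H\<close> by (intro clearing_equity_saturated_other[OF X]) simp_all
    then show ?thesis using L e assms by simp
  next
    case 2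
    then have "H \<le> e / y" using assms(2) by (simp add: pos_le_divide_eq mult.commute)
    have "\<bar>clearing_equity M N d e X ((y + h) * H) - clearing_equity M N d e X (y * H)\<bar>
        \<le> L * \<bar>(y + h) * H - y * H\<bar>"
      unfolding L_def by (rule clearing_equity_lipschitz_other)
    also have "\<bar>(y + h) * H - y * H\<bar> = h * H"
      using assms H by (simp add: algebra_simps)
    also have "L * (h * H) \<le> L * (h * (e / y))"
      using \<open>H \<le> e / y\<close> L assms by (intro mult_left_mono) simp_all
    finally show ?thesis by (simp add: mult_ac)
  qed
  then show ?thesis by (simp add: terminal_equity_at_def L_def X_def H_def)
qed

lemma terminal_equity_at_lower_bound:
  assumes "d \<le> x" "0 \<le> y"
  shows "(x - d) * indicator {z. 0 < m + inner v z} z \<le> terminal_equity_at x y z"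
proof -
  define E where "E = exp (m + inner v z)"
  have x: "0 \<le> x" using assms d by linarith
  have bounds: "0 \<le> clearing_equity M N d e (x * E) (y * exp (n + inner w z))"
    "x * E - d \<le> clearing_equity M N d e (x * E) (y * exp (n + inner w z))"
    using clearing_equity_bounds x assms by (simp_all add: E_def)
  show ?thesis
  proof (cases "0 < m + inner v z")
    case True
    then have "x \<le> x * E" using x by (simp add: E_def mult_le_cancel_left1)
    with True bounds show ?thesis by (simp add: terminal_equity_at_def E_def)
  next
    case False
    with bounds show ?thesis by (simp add: terminal_equity_at_def E_def)
  qed
qed

lemma equity_value_increment_own:
  assumes "d \<le> x" "0 \<le> y" "0 < h"
  shows "growth_prob * h \<le> equity_value (x + h) y - equity_value x y"
proof -
  have x: "0 \<le> x" using assms d by linarith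
  have "growth_prob * h = (\<integral>z. std_normal_density2 z * (h * indicator {z. 0 < m + inner v z} z) \<partial>lborel)"
    by (simp add: growth_prob_def mult_ac)
  also have "\<dots> \<le> (\<integral>z. std_normal_density2 z * (terminal_equity_at (x + h) y z - terminal_equity_at x y z) \<partial>lborel)"
    using integrable_growth_indicator equity_value_diff(1)[of x y "x + h" y] assms x
      terminal_equity_at_increment_own[OF assms] std_normal_density2_pos
    by (intro integral_mono) (simp_all add: mult.left_commute mult_left_mono less_imp_le)
  also have "\<dots> = equity_value (x + h) y - equity_value x y"
    using equity_value_diff(2)[of x y "x + h" y] assms x by simp
  finally show ?thesis .
qed

lemma equity_value_increment_other:
  assumes "0 \<le> x" "0 < y" "0 < h"
  shows "\<bar>equity_value x (y + h) - equity_value x y\<bar> \<le> M / (1 - N * M) * e / y * h"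
proof -
  have "equity_value x (y + h) - equity_value x y
      = (\<integral>z. std_normal_density2 z * (terminal_equity_at x (y + h) z - terminal_equity_at x y z) \<partial>lborel)"
    using equity_value_diff(2)[of x y x "y + h"] assms by simp
  also have "\<bar>\<dots>\<bar> \<le> M / (1 - N * M) * e / y * h"
  proof (rule abs_integral_le_std_normal_density2)
    show "integrable lborel (\<lambda>z. std_normal_density2 z * (terminal_equity_at x (y + h) z - terminal_equity_at x y z))"
      using equity_value_diff(1)[of x y x "y + h"] assms by simp
    show "\<bar>std_normal_density2 z * (terminal_equity_at x (y + h) z - terminal_equity_at x y z)\<bar>
        \<le> std_normal_density2 z * (M / (1 - N * M) * e / y * h)" for z
      using mult_left_mono[OF terminal_equity_at_increment_other[OF assms, of z]
          less_imp_le[OF std_normal_density2_pos[of z]]] std_normal_density2_pos[of z]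
      by (simp add: abs_mult)
  qed
  finally show ?thesis .
qed

lemma equity_value_lower_bound:
  assumes "d \<le> x" "0 \<le> y"
  shows "(x - d) * growth_prob \<le> equity_value x y"
proof -
  have "(x - d) * growth_prob = (\<integral>z. (x - d) * (std_normal_density2 z * indicator {z. 0 < m + inner v z} z) \<partial>lborel)"
    by (simp add: growth_prob_def)
  also have "\<dots> \<le> equity_value x y"
    unfolding equity_value_def
  proof (rule integral_mono)
    show "integrable lborel (\<lambda>z. (x - d) * (std_normal_density2 z * indicator {z. 0 < m + inner v z} z))"
      using integrable_growth_indicator by simp
    show "integrable lborel (\<lambda>z. std_normal_density2 z * terminal_equity_at x y z)"
      using integrable_equity_value[of x y] assms d by simp
    show "(x - d) * (std_normal_density2 z * indicator {z. 0 < m + inner v z} z)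
        \<le> std_normal_density2 z * terminal_equity_at x y z" for z
      using mult_left_mono[OF terminal_equity_at_lower_bound[OF assms, of z]
          less_imp_le[OF std_normal_density2_pos[of z]]]
      by (simp only: mult.left_commute)
  qed
  finally show ?thesis .
qed

lemma growth_prob_pos: "0 < growth_prob"
  unfolding growth_prob_def
proof (rule integral_pos_of_pos_on_open)
  have "v \<noteq> 0" using independent by auto
  define s where "s = (\<bar>m\<bar> + 1) / inner v v"
  have "0 < m + inner v (s *\<^sub>R v)"
    using \<open>v \<noteq> 0\<close> by (simp add: s_def)
  then show "{z. 0 < m + inner v z} \<noteq> {}" by blast
  have "{z. 0 < m + inner v z} = {z. inner v z > - m}" by auto
  then show "open {z. 0 < m + inner v z}"
    using open_halfspace_gt[where a = v and b = "- m"] by simp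
qed (use integrable_growth_indicator std_normal_density2_pos in \<open>auto simp: less_imp_le\<close>)

lemma equity_value_deriv_own:
  assumes "d \<le> x" "0 < y"
  obtains D where "((\<lambda>x. equity_value x y) has_real_derivative D) (at x)" and "growth_prob \<le> D"
proof -
  obtain D where D: "((\<lambda>x. equity_value x y) has_real_derivative D) (at x)"
    using equity_value_differentiable(1) assms d by force
  moreover have "growth_prob \<le> D"
    by (rule DERIV_ge_of_increment_ge[OF D]) (use equity_value_increment_own assms in auto)
  ultimately show ?thesis using that by blast
qed

lemma equity_value_deriv_other:
  assumes "0 < x" "0 < y"
  obtains D where "((\<lambda>y. equity_value x y) has_real_derivative D) (at y)"
    and "\<bar>D\<bar> * y \<le> M / (1 - N * M) * e"
proof -
  obtain D where D: "((\<lambda>y. equity_value x y) has_real_derivative D) (at y)"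
    using equity_value_differentiable(2) assms by force
  moreover have "\<bar>D\<bar> \<le> M / (1 - N * M) * e / y"
    by (rule DERIV_abs_le_of_increment_le[OF D]) (use equity_value_increment_other assms in auto)
  then have "\<bar>D\<bar> * y \<le> M / (1 - N * M) * e"
    by (simp only: pos_le_divide_eq[OF assms(2)])
  ultimately show ?thesis using that by blast
qed

end

section \<open>The two-firm model\<close>

text \<open>The equity correlation after the own elasticities \<open>\<Delta>\<^sub>i\<^sub>i a\<^sub>i / s\<^sub>i\<close> have been factored out of
  \<open>\<Sigma>\<^sup>s\<close>; the arguments are the cross ratios \<open>x = \<Delta>\<^sub>1\<^sub>2 a\<^sub>2 / (\<Delta>\<^sub>1\<^sub>1 a\<^sub>1)\<close> and
  \<open>y = \<Delta>\<^sub>2\<^sub>1 a\<^sub>1 / (\<Delta>\<^sub>2\<^sub>2 a\<^sub>2)\<close>.\<close>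
definition ratio_corr :: "real \<Rightarrow> real \<Rightarrow> real \<Rightarrow> real \<Rightarrow> real \<Rightarrow> real" where
  "ratio_corr sig1 sig2 rho x y =
     (y * sig1\<^sup>2 + rho * sig1 * sig2 + x * y * (rho * sig1 * sig2) + x * sig2\<^sup>2) /
     sqrt ((sig1\<^sup>2 + 2 * x * (rho * sig1 * sig2) + x\<^sup>2 * sig2\<^sup>2) *
           (y\<^sup>2 * sig1\<^sup>2 + 2 * y * (rho * sig1 * sig2) + sig2\<^sup>2))"

lemma tendsto_ratio_corr:
  assumes "0 < sig1" "0 < sig2" and "(x \<longlongrightarrow> 0) F" "(y \<longlongrightarrow> 0) F"
  shows "((\<lambda>n. ratio_corr sig1 sig2 rho (x n) (y n)) \<longlongrightarrow> rho) F"
proof -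
  have "((\<lambda>n. ratio_corr sig1 sig2 rho (x n) (y n)) \<longlongrightarrow> ratio_corr sig1 sig2 rho 0 0) F"
    unfolding ratio_corr_def using assms by (intro tendsto_intros) simp_all
  moreover have "ratio_corr sig1 sig2 rho 0 0 = rho"
    using assms by (simp add: ratio_corr_def real_sqrt_mult power2_eq_square)
  ultimately show ?thesis by simp
qed

definition equity_cov_of :: "(nat \<Rightarrow> real) \<Rightarrow> (nat \<Rightarrow> nat \<Rightarrow> real) \<Rightarrow> real \<Rightarrow> real \<Rightarrow>
    real \<Rightarrow> real \<Rightarrow> real \<Rightarrow> nat \<Rightarrow> nat \<Rightarrow> real" where
  "equity_cov_of s D a1 a2 sig1 sig2 rho i j =
     (let a = (\<lambda>k::nat. if k = 1 then a1 else a2)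
      in \<Sum>k\<in>{1::nat,2}. \<Sum>l\<in>{1::nat,2}.
           (inverse (s i) * D i k * a k) * asset_cov sig1 sig2 rho k l * (a l * D j l * inverse (s j)))"

lemma equity_cov_eq_equity_cov_of:
  "equity_cov Ms12 Ms21 Md12 Md21 d1 d2 r sig1 sig2 rho tau i j a1 a2 =
   equity_cov_of (\<lambda>m. equity_price Ms12 Ms21 Md12 Md21 d1 d2 r sig1 sig2 rho tau m a1 a2)
     (\<lambda>m k. equity_delta Ms12 Ms21 Md12 Md21 d1 d2 r sig1 sig2 rho tau m k a1 a2) a1 a2 sig1 sig2 rho i j"
  unfolding equity_cov_def equity_cov_of_def Let_def ..

lemma equity_corr_of_eq_ratio_corr:
  fixes s :: "nat \<Rightarrow> real" and D :: "nat \<Rightarrow> nat \<Rightarrow> real" and a1 a2 sig1 sig2 rho :: real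
  assumes "0 < s 1" "0 < s 2" "0 < D 1 1" "0 < D 2 2" "0 < a1" "0 < a2"
  defines "C \<equiv> equity_cov_of s D a1 a2 sig1 sig2 rho"
  shows "C 1 2 / sqrt (C 1 1 * C 2 2)
    = ratio_corr sig1 sig2 rho (D 1 2 * a2 / (D 1 1 * a1)) (D 2 1 * a1 / (D 2 2 * a2))"
proof -
  define x y where "x = D 1 2 * a2 / (D 1 1 * a1)" and "y = D 2 1 * a1 / (D 2 2 * a2)"
  define l1 l2 where "l1 = D 1 1 * a1 / s 1" and "l2 = D 2 2 * a2 / s 2"
  have l: "0 < l1" "0 < l2" using assms by (simp_all add: l1_def l2_def)
  have entries: "inverse (s 1) * D 1 1 * a1 = l1" "inverse (s 1) * D 1 2 * a2 = l1 * x"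
    "inverse (s 2) * D 2 2 * a2 = l2" "inverse (s 2) * D 2 1 * a1 = l2 * y"
    "a1 * D 1 1 * inverse (s 1) = l1" "a2 * D 1 2 * inverse (s 1) = l1 * x"
    "a2 * D 2 2 * inverse (s 2) = l2" "a1 * D 2 1 * inverse (s 2) = l2 * y"
    using assms by (simp_all add: l1_def l2_def x_def y_def field_simps)
  have sum2: "(\<Sum>k\<in>{1::nat, 2}. f k) = f 1 + f 2" for f :: "nat \<Rightarrow> real" by simp
  have a: "(if (1::nat) = 1 then a1 else a2) = a1" "(if (2::nat) = 1 then a1 else a2) = a2" by simp_all
  have \<Sigma>: "asset_cov sig1 sig2 rho 1 1 = sig1\<^sup>2" "asset_cov sig1 sig2 rho 2 2 = sig2\<^sup>2"
    "asset_cov sig1 sig2 rho 1 2 = rho * sig1 * sig2" "asset_cov sig1 sig2 rho 2 1 = rho * sig1 * sig2"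
    by (simp_all add: asset_cov_def)
  define B11 B22 B12 where
    "B11 = sig1\<^sup>2 + 2 * x * (rho * sig1 * sig2) + x\<^sup>2 * sig2\<^sup>2" and
    "B22 = y\<^sup>2 * sig1\<^sup>2 + 2 * y * (rho * sig1 * sig2) + sig2\<^sup>2" and
    "B12 = y * sig1\<^sup>2 + rho * sig1 * sig2 + x * y * (rho * sig1 * sig2) + x * sig2\<^sup>2"
  have C: "C 1 1 = l1\<^sup>2 * B11" "C 2 2 = l2\<^sup>2 * B22" "C 1 2 = l1 * l2 * B12"
    unfolding C_def equity_cov_of_def Let_def sum2 a \<Sigma> entries B11_def B22_def B12_def
    by (simp_all add: power2_eq_square algebra_simps)
  have "sqrt (l1\<^sup>2 * B11 * (l2\<^sup>2 * B22)) = l1 * l2 * sqrt (B11 * B22)"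
    using l by (simp add: real_sqrt_mult power2_eq_square mult_ac)
  then have "C 1 2 / sqrt (C 1 1 * C 2 2) = (l1 * l2 * B12) / (l1 * l2 * sqrt (B11 * B22))"
    unfolding C by simp
  also have "\<dots> = ratio_corr sig1 sig2 rho x y"
    using l by (simp add: ratio_corr_def B11_def B22_def B12_def)
  finally show ?thesis
    unfolding x_def y_def .
qed

lemma abs_cross_ratio_le:
  fixes own cross a b p K :: real
  assumes "0 < p" "p \<le> own" "\<bar>cross\<bar> * b \<le> K" "0 < a" "0 < b"
  shows "\<bar>cross * b / (own * a)\<bar> \<le> K / p / a"
proof -
  have "\<bar>cross * b / (own * a)\<bar> = \<bar>cross\<bar> * b / (own * a)"
    using assms by (simp add: abs_mult abs_divide)
  also have "\<dots> \<le> K / (p * a)"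
  proof (rule frac_le)
    show "0 \<le> K" using assms(3,5) by (meson abs_ge_zero less_imp_le mult_nonneg_nonneg order_trans)
  qed (use assms in \<open>auto intro: mult_right_mono\<close>)
  finally show ?thesis by simp
qed

lemma tendsto_zero_of_abs_le_divide:
  fixes f a :: "'b \<Rightarrow> real"
  assumes "filterlim a at_top F" and "\<forall>\<^sub>F n in F. \<bar>f n\<bar> \<le> K / a n"
  shows "(f \<longlongrightarrow> 0) F"
proof (rule Lim_null_comparison)
  show "\<forall>\<^sub>F n in F. norm (f n) \<le> K / a n"
    using assms(2) by simp
  show "((\<lambda>n. K / a n) \<longlongrightarrow> 0) F"
    by (rule tendsto_divide_0[OF tendsto_const filterlim_at_top_imp_at_infinity[OF assms(1)]])
qed

lemma deriv_cmult_eq: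
  "(f has_real_derivative D) (at x) \<Longrightarrow> deriv (\<lambda>u. c * f u) x = c * D"
  by (rule DERIV_imp_deriv) (rule DERIV_cmult)

locale two_firm_model =
  fixes Md12 Md21 d1 d2 r sig1 sig2 rho tau :: real
  assumes holdings: "0 \<le> Md12" "Md12 < 1" "0 \<le> Md21" "Md21 < 1"
    and debts: "0 < d1" "0 < d2"
    and vols: "0 < sig1" "0 < sig2"
    and corr: "-1 < rho" "rho < 1"
    and maturity: "0 < tau"
begin

abbreviation price :: "nat \<Rightarrow> real \<Rightarrow> real \<Rightarrow> real" where
  "price i a1 a2 \<equiv> equity_price 0 0 Md12 Md21 d1 d2 r sig1 sig2 rho tau i a1 a2"

abbreviation delta :: "nat \<Rightarrow> nat \<Rightarrow> real \<Rightarrow> real \<Rightarrow> real" where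
  "delta i j a1 a2 \<equiv> equity_delta 0 0 Md12 Md21 d1 d2 r sig1 sig2 rho tau i j a1 a2"

definition loading1 :: "real \<times> real" where
  "loading1 = (sig1 * sqrt tau, 0)"

definition loading2 :: "real \<times> real" where
  "loading2 = (sig2 * sqrt tau * rho, sig2 * sqrt tau * sqrt (1 - rho\<^sup>2))"

lemma loadings_independent: "fst loading1 * snd loading2 \<noteq> snd loading1 * fst loading2"
proof -
  have "rho\<^sup>2 < 1" using corr by (simp add: abs_square_less_1)
  then show ?thesis using vols maturity by (simp add: loading1_def loading2_def)
qed

sublocale firm1: lognormal_debt_network Md12 Md21 d1 d2 "(r - sig1\<^sup>2 / 2) * tau" "(r - sig2\<^sup>2 / 2) * tau"
    loading1 loading2
  using holdings debts loadings_independent by unfold_locales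

sublocale firm2: lognormal_debt_network Md21 Md12 d2 d1 "(r - sig2\<^sup>2 / 2) * tau" "(r - sig1\<^sup>2 / 2) * tau"
    loading2 loading1
  using holdings debts loadings_independent by unfold_locales (auto simp: mult.commute)

lemma price_eq_equity_value:
  "price 1 a1 a2 = exp (- r * tau) * firm1.equity_value a1 a2"
  "price 2 a1 a2 = exp (- r * tau) * firm2.equity_value a2 a1"
proof -
  have assets: "terminal_asset1 r sig1 tau a1 (fst z) = a1 * exp ((r - sig1\<^sup>2 / 2) * tau + inner loading1 z)"
    "terminal_asset2 r sig2 rho tau a2 (fst z) (snd z) = a2 * exp ((r - sig2\<^sup>2 / 2) * tau + inner loading2 z)"
    for z
    by (simp_all add: terminal_asset1_def terminal_asset2_def loading1_def loading2_def inner_prod_def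
        algebra_simps)
  have "price 1 a1 a2 = (\<integral>z. exp (- r * tau) * (std_normal_density2 z * firm1.terminal_equity_at a1 a2 z) \<partial>lborel)"
    "price 2 a1 a2 = (\<integral>z. exp (- r * tau) * (std_normal_density2 z * firm2.terminal_equity_at a2 a1 z) \<partial>lborel)"
    unfolding equity_price_def lborel_prod firm1.terminal_equity_at_def firm2.terminal_equity_at_def
      std_normal_density2_def
    by (rule Bochner_Integration.integral_cong; simp add: terminal_equity_def firm1.terminal_values_eq assets)+
  then show "price 1 a1 a2 = exp (- r * tau) * firm1.equity_value a1 a2"
    "price 2 a1 a2 = exp (- r * tau) * firm2.equity_value a2 a1"
    by (simp_all add: firm1.equity_value_def firm2.equity_value_def)
qed

lemma delta_bounds:
  assumes "d1 \<le> a1" "d2 \<le> a2"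
  shows "exp (- r * tau) * firm1.growth_prob \<le> delta 1 1 a1 a2"
    and "exp (- r * tau) * firm2.growth_prob \<le> delta 2 2 a1 a2"
    and "\<bar>delta 1 2 a1 a2\<bar> * a2 \<le> exp (- r * tau) * (Md12 / (1 - Md21 * Md12) * d2)"
    and "\<bar>delta 2 1 a1 a2\<bar> * a1 \<le> exp (- r * tau) * (Md21 / (1 - Md12 * Md21) * d1)"
proof -
  have a: "0 < a1" "0 < a2" using assms debts by linarith+
  obtain D11 where D11: "((\<lambda>u. firm1.equity_value u a2) has_real_derivative D11) (at a1)"
    "firm1.growth_prob \<le> D11"
    by (rule firm1.equity_value_deriv_own[OF assms(1) a(2)])
  obtain D22 where D22: "((\<lambda>u. firm2.equity_value u a1) has_real_derivative D22) (at a2)"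
    "firm2.growth_prob \<le> D22"
    by (rule firm2.equity_value_deriv_own[OF assms(2) a(1)])
  obtain D12 where D12: "((\<lambda>u. firm1.equity_value a1 u) has_real_derivative D12) (at a2)"
    "\<bar>D12\<bar> * a2 \<le> Md12 / (1 - Md21 * Md12) * d2"
    by (rule firm1.equity_value_deriv_other[OF a])
  obtain D21 where D21: "((\<lambda>u. firm2.equity_value a2 u) has_real_derivative D21) (at a1)"
    "\<bar>D21\<bar> * a1 \<le> Md21 / (1 - Md12 * Md21) * d1"
    by (rule firm2.equity_value_deriv_other[OF a(2,1)])
  have "delta 1 1 a1 a2 = exp (- r * tau) * D11" "delta 2 2 a1 a2 = exp (- r * tau) * D22"
    "delta 1 2 a1 a2 = exp (- r * tau) * D12" "delta 2 1 a1 a2 = exp (- r * tau) * D21"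
    unfolding equity_delta_def price_eq_equity_value
    using deriv_cmult_eq[OF D11(1)] deriv_cmult_eq[OF D22(1)] deriv_cmult_eq[OF D12(1)]
      deriv_cmult_eq[OF D21(1)]
    by simp_all
  then show "exp (- r * tau) * firm1.growth_prob \<le> delta 1 1 a1 a2"
    and "exp (- r * tau) * firm2.growth_prob \<le> delta 2 2 a1 a2"
    and "\<bar>delta 1 2 a1 a2\<bar> * a2 \<le> exp (- r * tau) * (Md12 / (1 - Md21 * Md12) * d2)"
    and "\<bar>delta 2 1 a1 a2\<bar> * a1 \<le> exp (- r * tau) * (Md21 / (1 - Md12 * Md21) * d1)"
    using D11(2) D22(2) mult_left_mono[OF D12(2), of "exp (- r * tau)"]
      mult_left_mono[OF D21(2), of "exp (- r * tau)"] by (simp_all add: abs_mult mult.assoc)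
qed

lemma price_pos:
  assumes "d1 < a1" "d2 < a2"
  shows "0 < price 1 a1 a2" and "0 < price 2 a1 a2"
proof -
  have "0 < (a1 - d1) * firm1.growth_prob" "0 < (a2 - d2) * firm2.growth_prob"
    using assms firm1.growth_prob_pos firm2.growth_prob_pos by simp_all
  then show "0 < price 1 a1 a2" and "0 < price 2 a1 a2"
    using firm1.equity_value_lower_bound[of a1 a2] firm2.equity_value_lower_bound[of a2 a1] assms debts
    unfolding price_eq_equity_value by simp_all
qed

abbreviation cross_ratio1 :: "real \<Rightarrow> real \<Rightarrow> real" where
  "cross_ratio1 a1 a2 \<equiv> delta 1 2 a1 a2 * a2 / (delta 1 1 a1 a2 * a1)"

abbreviation cross_ratio2 :: "real \<Rightarrow> real \<Rightarrow> real" where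
  "cross_ratio2 a1 a2 \<equiv> delta 2 1 a1 a2 * a1 / (delta 2 2 a1 a2 * a2)"

lemma equity_corr_eq_ratio_corr:
  assumes "d1 < a1" "d2 < a2"
  shows "equity_corr 0 0 Md12 Md21 d1 d2 r sig1 sig2 rho tau a1 a2
    = ratio_corr sig1 sig2 rho (cross_ratio1 a1 a2) (cross_ratio2 a1 a2)"
proof -
  have "0 < exp (- r * tau) * firm1.growth_prob" "0 < exp (- r * tau) * firm2.growth_prob"
    using firm1.growth_prob_pos firm2.growth_prob_pos by simp_all
  then have "0 < delta 1 1 a1 a2" "0 < delta 2 2 a1 a2"
    using delta_bounds(1,2)[of a1 a2] assms by simp_all
  then show ?thesis
    using equity_corr_of_eq_ratio_corr[where s = "\<lambda>i. price i a1 a2" and D = "\<lambda>i j. delta i j a1 a2"]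
      price_pos[OF assms] assms debts
    unfolding equity_corr_def equity_cov_eq_equity_cov_of by simp
qed

lemma tendsto_cross_ratios:
  assumes "filterlim a1 at_top F" "filterlim a2 at_top F"
  shows "((\<lambda>n. cross_ratio1 (a1 n) (a2 n)) \<longlongrightarrow> 0) F"
    and "((\<lambda>n. cross_ratio2 (a1 n) (a2 n)) \<longlongrightarrow> 0) F"
proof -
  define p1 p2 where "p1 = exp (- r * tau) * firm1.growth_prob"
    and "p2 = exp (- r * tau) * firm2.growth_prob"
  define K1 K2 where "K1 = exp (- r * tau) * (Md12 / (1 - Md21 * Md12) * d2) / p1"
    and "K2 = exp (- r * tau) * (Md21 / (1 - Md12 * Md21) * d1) / p2"
  have p: "0 < p1" "0 < p2"
    using firm1.growth_prob_pos firm2.growth_prob_pos by (simp_all add: p1_def p2_def)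
  have "\<forall>\<^sub>F n in F. d1 \<le> a1 n \<and> d2 \<le> a2 n"
    using assms by (simp add: filterlim_at_top eventually_conj)
  then have "\<forall>\<^sub>F n in F. \<bar>cross_ratio1 (a1 n) (a2 n)\<bar> \<le> K1 / a1 n
      \<and> \<bar>cross_ratio2 (a1 n) (a2 n)\<bar> \<le> K2 / a2 n"
  proof eventually_elim
    case (elim n)
    with debts have "0 < a1 n" "0 < a2 n" by linarith+
    with elim p show ?case
      unfolding K1_def K2_def p1_def p2_def by (intro conjI abs_cross_ratio_le delta_bounds) auto
  qed
  then have bound1: "\<forall>\<^sub>F n in F. \<bar>cross_ratio1 (a1 n) (a2 n)\<bar> \<le> K1 / a1 n"
    and bound2: "\<forall>\<^sub>F n in F. \<bar>cross_ratio2 (a1 n) (a2 n)\<bar> \<le> K2 / a2 n"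
    by (simp_all add: eventually_conj_iff)
  show "((\<lambda>n. cross_ratio1 (a1 n) (a2 n)) \<longlongrightarrow> 0) F"
    by (rule tendsto_zero_of_abs_le_divide[OF assms(1) bound1])
  show "((\<lambda>n. cross_ratio2 (a1 n) (a2 n)) \<longlongrightarrow> 0) F"
    by (rule tendsto_zero_of_abs_le_divide[OF assms(2) bound2])
qed

end

theorem mainTheorem4:
  fixes Md12 Md21 d1 d2 r sig1 sig2 rho tau :: real
  assumes "0 \<le> Md12" "Md12 < 1" "0 \<le> Md21" "Md21 < 1"
    and "0 < d1" "0 < d2"
    and "0 < sig1" "0 < sig2"
    and "-1 < rho" "rho < 1"
    and "0 < tau"
  shows "\<forall>a1 a2 :: nat \<Rightarrow> real.
           filterlim a1 at_top sequentially \<and> filterlim a2 at_top sequentially \<and>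
           (\<exists>c C. 0 < c \<and> (\<forall>\<^sub>F n in sequentially. c \<le> a1 n / a2 n \<and> a1 n / a2 n \<le> C))
           \<longrightarrow> (\<lambda>n. equity_corr 0 0 Md12 Md21 d1 d2 r sig1 sig2 rho tau (a1 n) (a2 n))
                 \<longlonglongrightarrow> rho"
proof (intro allI impI)
  interpret two_firm_model Md12 Md21 d1 d2 r sig1 sig2 rho tau
    using assms by unfold_locales
  fix a1 a2 :: "nat \<Rightarrow> real"
  assume "filterlim a1 at_top sequentially \<and> filterlim a2 at_top sequentially \<and>
    (\<exists>c C. 0 < c \<and> (\<forall>\<^sub>F n in sequentially. c \<le> a1 n / a2 n \<and> a1 n / a2 n \<le> C))"
  then have a1: "filterlim a1 at_top sequentially" and a2: "filterlim a2 at_top sequentially"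
    by blast+
  have "(\<lambda>n. ratio_corr sig1 sig2 rho (cross_ratio1 (a1 n) (a2 n)) (cross_ratio2 (a1 n) (a2 n)))
      \<longlonglongrightarrow> rho"
    using assms(7,8) tendsto_cross_ratios[OF a1 a2] by (rule tendsto_ratio_corr)
  moreover have "\<forall>\<^sub>F n in sequentially. d1 < a1 n \<and> d2 < a2 n"
    using a1 a2 by (simp add: filterlim_at_top_dense eventually_conj)
  then have "\<forall>\<^sub>F n in sequentially.
      ratio_corr sig1 sig2 rho (cross_ratio1 (a1 n) (a2 n)) (cross_ratio2 (a1 n) (a2 n))
        = equity_corr 0 0 Md12 Md21 d1 d2 r sig1 sig2 rho tau (a1 n) (a2 n)"
    by eventually_elim (rule equity_corr_eq_ratio_corr[symmetric]; simp)
  ultimately show "(\<lambda>n. equity_corr 0 0 Md12 Md21 d1 d2 r sig1 sig2 rho tau (a1 n) (a2 n)) \<longlonglongrightarrow> rho"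
    by (rule Lim_transform_eventually)
qed

end
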